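(* There is no automorphism $\varphi$ of $E$ of type 4 such that its linearization $\varphi_\ell$ is the identity map on $E$.
   Context: $F$ is a field of characteristic zero, $L$ an infinite-dimensional $F$-vector space with basis $e_1,e_2,\ldots$, $E$ the Grassmann algebra of $L$. An automorphism $\varphi$ of $E$ with $\varphi^2=\mathrm{id}$ is of type 4 if for every basis $\gamma$ of $L$ no element $v\in\gamma$ satisfies $\varphi(v)=\pm v$. Linearization: write $\varphi(e_i)=u_i+v_i$ with $u_i\in L$ and $v_i$ a linear combination of monomials of length $\ge2$; $\varphi_\ell$ is the endomorphism of $E$ with $\varphi_\ell(e_i)=u_i$ for all $i$. *)

theory Defs
  imports Main
begin

text \<open>An element of E is represented by its coefficient function on monomials:
  a monomial e_{i_1} ... e_{i_k} with i_1 < ... < i_k is identified with the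
  finite set {i_1,...,i_k} of natural numbers (the empty set is the unit 1).\<close>

type_synonym 'a grass = "nat set \<Rightarrow> 'a"

definition grass_carrier :: "('a::field_char_0) grass set" where
  "grass_carrier = {x. finite {S. x S \<noteq> 0} \<and> (\<forall>S. x S \<noteq> 0 \<longrightarrow> finite S)}"

definition gadd :: "('a::field_char_0) grass \<Rightarrow> 'a grass \<Rightarrow> 'a grass" where
  "gadd x y = (\<lambda>S. x S + y S)"

definition gsmult :: "'a::field_char_0 \<Rightarrow> 'a grass \<Rightarrow> 'a grass" where
  "gsmult c x = (\<lambda>S. c * x S)"

definition gneg :: "('a::field_char_0) grass \<Rightarrow> 'a grass" where
  "gneg x = (\<lambda>S. - x S)"

text \<open>Sign of e_T e_U (T, U disjoint) when rewritten as the ordered monomial e_{T \<union> U}.\<close>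
definition gsign :: "nat set \<Rightarrow> nat set \<Rightarrow> 'a::field_char_0" where
  "gsign T U = (-1) ^ card {(t, u). t \<in> T \<and> u \<in> U \<and> u < t}"

definition gmult :: "('a::field_char_0) grass \<Rightarrow> 'a grass \<Rightarrow> 'a grass" where
  "gmult x y = (\<lambda>S. if finite S then (\<Sum>T\<in>Pow S. gsign T (S - T) * x T * y (S - T)) else 0)"

definition gunit :: "('a::field_char_0) grass" where
  "gunit = (\<lambda>S. if S = {} then 1 else 0)"

definition gen :: "nat \<Rightarrow> ('a::field_char_0) grass" where
  "gen i = (\<lambda>S. if S = {i} then 1 else 0)"

definition Lspace :: "('a::field_char_0) grass set" where
  "Lspace = {x \<in> grass_carrier. \<forall>S. x S \<noteq> 0 \<longrightarrow> card S = 1}"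

definition is_basis_L :: "('a::field_char_0) grass set \<Rightarrow> bool" where
  "is_basis_L \<gamma> \<longleftrightarrow> \<gamma> \<subseteq> Lspace
     \<and> (\<forall>A c. finite A \<and> A \<subseteq> \<gamma> \<and> (\<forall>S. (\<Sum>v\<in>A. c v * v S) = 0) \<longrightarrow> (\<forall>v\<in>A. c v = 0))
     \<and> (\<forall>x\<in>Lspace. \<exists>A c. finite A \<and> A \<subseteq> \<gamma> \<and> x = (\<lambda>S. \<Sum>v\<in>A. c v * v S))"

definition is_endo :: "(('a::field_char_0) grass \<Rightarrow> 'a grass) \<Rightarrow> bool" where
  "is_endo f \<longleftrightarrow> f ` grass_carrier \<subseteq> grass_carrier
     \<and> (\<forall>x\<in>grass_carrier. \<forall>y\<in>grass_carrier. f (gadd x y) = gadd (f x) (f y))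
     \<and> (\<forall>c. \<forall>x\<in>grass_carrier. f (gsmult c x) = gsmult c (f x))
     \<and> (\<forall>x\<in>grass_carrier. \<forall>y\<in>grass_carrier. f (gmult x y) = gmult (f x) (f y))
     \<and> f gunit = gunit"

definition is_auto :: "(('a::field_char_0) grass \<Rightarrow> 'a grass) \<Rightarrow> bool" where
  "is_auto f \<longleftrightarrow> is_endo f \<and> bij_betw f grass_carrier grass_carrier"

definition is_involution :: "(('a::field_char_0) grass \<Rightarrow> 'a grass) \<Rightarrow> bool" where
  "is_involution f \<longleftrightarrow> (\<forall>x\<in>grass_carrier. f (f x) = x)"

definition type4 :: "(('a::field_char_0) grass \<Rightarrow> 'a grass) \<Rightarrow> bool" where
  "type4 f \<longleftrightarrow> (\<forall>\<gamma>. is_basis_L \<gamma> \<longrightarrow> (\<forall>v\<in>\<gamma>. f v \<noteq> v \<and> f v \<noteq> gneg v))"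

definition is_linearization ::
  "(('a::field_char_0) grass \<Rightarrow> 'a grass) \<Rightarrow> ('a grass \<Rightarrow> 'a grass) \<Rightarrow> bool" where
  "is_linearization f g \<longleftrightarrow> is_endo g \<and>
     (\<forall>i. \<exists>u v. u \<in> Lspace \<and> v \<in> grass_carrier \<and> (\<forall>S. card S < 2 \<longrightarrow> v S = 0)
               \<and> f (gen i) = gadd u v \<and> g (gen i) = u)"

end

theory Submission
  imports Defs
begin

(* Let E^(k) = filt k be the ideal spanned by the monomials of length at least k.
  If the linearization of an endomorphism \<phi> is the identity, then \<phi>(e_i) - e_i lies
  in E^(2), and by multiplicativity \<phi>(x) - x lies in E^(k+1) whenever x lies in E^(k).
  For v = \<phi>(e_i) - e_i the involution property gives \<phi>(v) = -v, so -2v = \<phi>(v) - v;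
  as 2 is invertible, v in E^(k) implies v in E^(k+1), hence v = 0. So \<phi> fixes every
  e_i, and \<phi> is not of type 4 with respect to the standard basis. *)

definition filt :: "nat \<Rightarrow> ('a::field_char_0) grass set" where
  "filt k = {x. \<forall>S. card S < k \<longrightarrow> x S = 0}"

definition mon :: "nat set \<Rightarrow> ('a::field_char_0) grass" where
  "mon T = (\<lambda>S. if S = T then 1 else 0)"

definition gdiff :: "('a::field_char_0) grass \<Rightarrow> 'a grass \<Rightarrow> 'a grass" where
  "gdiff x y = (\<lambda>S. x S - y S)"

definition identity_linear_part :: "(('a::field_char_0) grass \<Rightarrow> 'a grass) \<Rightarrow> bool" where
  "identity_linear_part f \<longleftrightarrow> (\<forall>i. gdiff (f (gen i)) (gen i) \<in> filt 2)"

lemma gdiff_eq_gadd_gsmult: "gdiff x y = gadd x (gsmult (-1) y)"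
  by (simp add: gdiff_def gadd_def gsmult_def)

lemma gadd_gdiff: "gadd y (gdiff x y) = x"
  by (simp add: gdiff_def gadd_def add_ac)

lemma grass_carrier_finite_support: "x \<in> grass_carrier \<Longrightarrow> finite {S. x S \<noteq> 0}"
  by (simp add: grass_carrier_def)

lemma grass_carrier_finite_monomial: "x \<in> grass_carrier \<Longrightarrow> x S \<noteq> 0 \<Longrightarrow> finite S"
  by (simp add: grass_carrier_def)

lemma grass_carrierI:
  assumes "finite {S. x S \<noteq> 0}" and "\<And>S. x S \<noteq> 0 \<Longrightarrow> finite S"
  shows "x \<in> grass_carrier"
  using assms by (simp add: grass_carrier_def)

lemma gadd_carrier:
  assumes "x \<in> grass_carrier" "y \<in> grass_carrier"
  shows "gadd x y \<in> grass_carrier"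
proof (rule grass_carrierI)
  have "{S. gadd x y S \<noteq> 0} \<subseteq> {S. x S \<noteq> 0} \<union> {S. y S \<noteq> 0}"
    by (auto simp: gadd_def)
  then show "finite {S. gadd x y S \<noteq> 0}"
    by (rule finite_subset) (use assms in \<open>simp add: grass_carrier_finite_support\<close>)
next
  fix S
  assume "gadd x y S \<noteq> 0"
  then have "x S \<noteq> 0 \<or> y S \<noteq> 0" by (auto simp: gadd_def)
  then show "finite S" using assms grass_carrier_finite_monomial by blast
qed

lemma gsmult_carrier: "x \<in> grass_carrier \<Longrightarrow> gsmult c x \<in> grass_carrier"
  by (rule grass_carrierI) (auto simp: gsmult_def grass_carrier_def elim: rev_finite_subset)

lemma gdiff_carrier: "x \<in> grass_carrier \<Longrightarrow> y \<in> grass_carrier \<Longrightarrow> gdiff x y \<in> grass_carrier"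
  by (simp add: gdiff_eq_gadd_gsmult gadd_carrier gsmult_carrier)

lemma mon_carrier: "finite T \<Longrightarrow> mon T \<in> grass_carrier"
  by (rule grass_carrierI) (auto simp: mon_def split: if_splits)

lemma gen_carrier: "gen i \<in> grass_carrier"
  by (rule grass_carrierI) (auto simp: gen_def split: if_splits)

lemma sum_carrier:
  assumes "finite A" "\<And>a. a \<in> A \<Longrightarrow> y a \<in> grass_carrier"
  shows "(\<lambda>S. \<Sum>a\<in>A. y a S) \<in> grass_carrier"
  using assms
proof (induction A rule: finite_induct)
  case empty
  then show ?case by (simp add: grass_carrier_def)
next
  case (insert a A)
  then have "(\<lambda>S. \<Sum>b\<in>insert a A. y b S) = gadd (y a) (\<lambda>S. \<Sum>b\<in>A. y b S)"
    by (simp add: gadd_def)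
  then show ?case using insert by (simp add: gadd_carrier)
qed

lemma grass_expand:
  assumes "x \<in> grass_carrier"
  shows "x = (\<lambda>R. \<Sum>S | x S \<noteq> 0. gsmult (x S) (mon S) R)"
proof
  fix R
  have "(\<Sum>S | x S \<noteq> 0. gsmult (x S) (mon S) R) = (\<Sum>S | x S \<noteq> 0. if S = R then x S else 0)"
    by (rule sum.cong) (auto simp: gsmult_def mon_def)
  also have "\<dots> = x R"
    using assms by (simp add: grass_carrier_finite_support sum.delta')
  finally show "x R = (\<Sum>S | x S \<noteq> 0. gsmult (x S) (mon S) R)" by simp
qed

lemma gmult_gadd_left: "gmult (gadd x y) z = gadd (gmult x z) (gmult y z)"
  by (rule ext) (simp add: gmult_def gadd_def sum.distrib algebra_simps)

lemma gmult_gadd_right: "gmult x (gadd y z) = gadd (gmult x y) (gmult x z)"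
  by (rule ext) (simp add: gmult_def gadd_def sum.distrib algebra_simps)

lemma gsign_singleton_less:
  assumes "\<forall>u\<in>U. t < u"
  shows "gsign {t} U = 1"
proof -
  have "{(t', u). t' \<in> {t} \<and> u \<in> U \<and> u < t'} = {}"
    using assms by auto
  then show ?thesis unfolding gsign_def by (simp only: card.empty power_0)
qed

lemma gen_gmult_mon:
  assumes "finite T" "\<forall>t\<in>T. i < t"
  shows "gmult (gen i) (mon T) = mon (insert i T)"
proof
  fix R :: "nat set"
  show "gmult (gen i) (mon T) R = mon (insert i T) R"
  proof (cases "finite R")
    case False
    then show ?thesis using assms by (auto simp: gmult_def mon_def)
  next
    case True
    have "gmult (gen i) (mon T) R = (\<Sum>T'\<in>Pow R. gsign T' (R - T') * gen i T' * mon T (R - T'))"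
      using True by (simp add: gmult_def)
    also have "\<dots> = (\<Sum>T'\<in>Pow R. if T' = {i} then gsign {i} (R - {i}) * mon T (R - {i}) else 0)"
      by (rule sum.cong) (auto simp: gen_def)
    also have "\<dots> = (if i \<in> R then gsign {i} (R - {i}) * mon T (R - {i}) else 0)"
      using True by (simp add: sum.delta')
    also have "\<dots> = mon (insert i T) R"
      using assms(2) gsign_singleton_less[OF assms(2)] by (auto simp: mon_def)
    finally show ?thesis .
  qed
qed

lemma filt_mono: "j \<le> k \<Longrightarrow> x \<in> filt k \<Longrightarrow> x \<in> filt j"
  by (simp add: filt_def)

lemma gadd_filt: "x \<in> filt k \<Longrightarrow> y \<in> filt k \<Longrightarrow> gadd x y \<in> filt k"
  by (simp add: filt_def gadd_def)

lemma gen_filt: "gen i \<in> filt 1"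
  by (auto simp: filt_def gen_def)

lemma mon_filt: "mon T \<in> filt (card T)"
  by (auto simp: filt_def mon_def)

lemma gmult_filt:
  assumes "x \<in> filt a" "y \<in> filt b"
  shows "gmult x y \<in> filt (a + b)"
  unfolding filt_def
proof (intro CollectI allI impI)
  fix S :: "nat set"
  assume card_S: "card S < a + b"
  show "gmult x y S = 0"
  proof (cases "finite S")
    case True
    have "gsign T (S - T) * x T * y (S - T) = 0" if "T \<subseteq> S" for T
    proof -
      have "card T + card (S - T) = card S"
        using True that by (metis card_Diff_subset card_mono finite_subset le_add_diff_inverse)
      then have "card T < a \<or> card (S - T) < b" using card_S by linarith
      then show ?thesis using assms by (auto simp: filt_def)
    qed
    then show ?thesis using True by (simp add: gmult_def del: mult_eq_0_iff)
  qed (simp add: gmult_def)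
qed

lemma endo_gunit: "is_endo f \<Longrightarrow> f gunit = gunit"
  by (simp add: is_endo_def)

lemma endo_carrier: "is_endo f \<Longrightarrow> x \<in> grass_carrier \<Longrightarrow> f x \<in> grass_carrier"
  by (auto simp: is_endo_def)

lemma endo_gadd:
  "is_endo f \<Longrightarrow> x \<in> grass_carrier \<Longrightarrow> y \<in> grass_carrier \<Longrightarrow> f (gadd x y) = gadd (f x) (f y)"
  by (simp add: is_endo_def)

lemma endo_gsmult: "is_endo f \<Longrightarrow> x \<in> grass_carrier \<Longrightarrow> f (gsmult c x) = gsmult c (f x)"
  by (simp add: is_endo_def)

lemma endo_gmult:
  "is_endo f \<Longrightarrow> x \<in> grass_carrier \<Longrightarrow> y \<in> grass_carrier \<Longrightarrow> f (gmult x y) = gmult (f x) (f y)"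
  by (simp add: is_endo_def)

lemma endo_gdiff:
  "is_endo f \<Longrightarrow> x \<in> grass_carrier \<Longrightarrow> y \<in> grass_carrier \<Longrightarrow> f (gdiff x y) = gdiff (f x) (f y)"
  by (simp add: gdiff_eq_gadd_gsmult endo_gadd endo_gsmult gsmult_carrier)

lemma endo_zero:
  assumes "is_endo f"
  shows "f (\<lambda>S. 0) = (\<lambda>S. 0)"
proof -
  have "gunit \<in> grass_carrier"
    by (rule grass_carrierI) (auto simp: gunit_def split: if_splits)
  then have "f (gsmult 0 gunit) = gsmult 0 (f gunit)"
    by (rule endo_gsmult[OF assms])
  then show ?thesis by (simp add: gsmult_def)
qed

lemma endo_sum:
  assumes "is_endo f" "finite A" "\<And>a. a \<in> A \<Longrightarrow> y a \<in> grass_carrier"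
  shows "f (\<lambda>S. \<Sum>a\<in>A. y a S) = (\<lambda>S. \<Sum>a\<in>A. f (y a) S)"
  using assms(2,3)
proof (induction A rule: finite_induct)
  case empty
  then show ?case using endo_zero[OF assms(1)] by simp
next
  case (insert a A)
  have "(\<lambda>S. \<Sum>b\<in>insert a A. y b S) = gadd (y a) (\<lambda>S. \<Sum>b\<in>A. y b S)"
    using insert by (simp add: gadd_def)
  moreover have "(\<lambda>S. \<Sum>b\<in>A. y b S) \<in> grass_carrier"
    using insert by (simp add: sum_carrier)
  ultimately show ?case
    using insert endo_gadd[OF assms(1)] by (simp add: gadd_def)
qed

lemma endo_expand:
  assumes "is_endo f" "x \<in> grass_carrier"
  shows "f x = (\<lambda>R. \<Sum>S | x S \<noteq> 0. x S * f (mon S) R)"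
proof -
  have "f x = f (\<lambda>R. \<Sum>S | x S \<noteq> 0. gsmult (x S) (mon S) R)"
    using grass_expand[OF assms(2)] by (rule arg_cong)
  also have "\<dots> = (\<lambda>R. \<Sum>S | x S \<noteq> 0. f (gsmult (x S) (mon S)) R)"
    using assms by (intro endo_sum)
      (auto simp: grass_carrier_finite_support grass_carrier_finite_monomial
        gsmult_carrier mon_carrier)
  also have "\<dots> = (\<lambda>R. \<Sum>S | x S \<noteq> 0. gsmult (x S) (f (mon S)) R)"
    using assms by (intro ext sum.cong refl)
      (simp add: endo_gsmult grass_carrier_finite_monomial mon_carrier)
  finally show ?thesis by (simp add: gsmult_def)
qed

lemma mon_Min_split:
  assumes "finite A" "A \<noteq> {}"
  shows "mon A = gmult (gen (Min A)) (mon (A - {Min A}))"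
proof -
  have "\<forall>t\<in>A - {Min A}. Min A < t"
    using assms by (auto simp: order.strict_iff_order)
  then have "gmult (gen (Min A)) (mon (A - {Min A})) = mon (insert (Min A) (A - {Min A}))"
    using assms by (intro gen_gmult_mon) auto
  then show ?thesis using assms by (metis Min_in insert_Diff)
qed

lemma endo_mon_gdiff_filt:
  assumes endo: "is_endo f" and lin: "identity_linear_part f" and "finite A"
  shows "gdiff (f (mon A)) (mon A) \<in> filt (Suc (card A))"
  using \<open>finite A\<close>
proof (induction A rule: finite_remove_induct)
  case empty
  have "mon {} = (gunit :: 'a grass)" by (auto simp: mon_def gunit_def)
  then show ?case using endo_gunit[OF endo] by (simp add: gdiff_def filt_def)
next
  case (remove A)
  define i where "i = Min A"
  define T where "T = A - {i}"
  define v where "v = gdiff (f (gen i)) (gen i)"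
  define r where "r = gdiff (f (mon T)) (mon T)"
  have "finite T" "i \<in> A" using remove by (simp_all add: T_def i_def)
  then have card_A: "card A = Suc (card T)" using remove.hyps(1) by (metis T_def card_Suc_Diff1)
  have v: "v \<in> filt 2" using lin by (simp add: identity_linear_part_def v_def)
  have r: "r \<in> filt (card A)"
    unfolding card_A r_def T_def by (rule remove.IH[OF \<open>i \<in> A\<close>])
  have mon_A: "mon A = gmult (gen i) (mon T)"
    using remove.hyps mon_Min_split by (simp add: i_def T_def)
  have "f (mon A) = gmult (f (gen i)) (f (mon T))"
    using endo \<open>finite T\<close> by (simp add: mon_A endo_gmult gen_carrier mon_carrier)
  also have "\<dots> = gmult (gadd (gen i) v) (gadd (mon T) r)"
    by (simp add: v_def r_def gadd_gdiff)
  finally have "gdiff (f (mon A)) (mon A)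
      = gadd (gmult (gen i) r) (gadd (gmult v (mon T)) (gmult v r))"
    by (simp add: mon_A gmult_gadd_left gmult_gadd_right) (simp add: gdiff_def gadd_def add_ac)
  moreover have "gmult (gen i) r \<in> filt (Suc (card A))"
    using gmult_filt[OF gen_filt r] by simp
  moreover have "gmult v (mon T) \<in> filt (Suc (card A))"
    using gmult_filt[OF v mon_filt] card_A by simp
  moreover have "gmult v r \<in> filt (Suc (card A))"
    using filt_mono[OF _ gmult_filt[OF v r]] by simp
  ultimately show ?case by (simp add: gadd_filt)
qed

lemma endo_gdiff_filt:
  assumes endo: "is_endo f" and lin: "identity_linear_part f"
    and x: "x \<in> grass_carrier" "x \<in> filt k"
  shows "gdiff (f x) x \<in> filt (Suc k)"
  unfolding filt_def
proof (intro CollectI allI impI)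
  fix R :: "nat set"
  assume card_R: "card R < Suc k"
  have "x R = (\<Sum>S | x S \<noteq> 0. x S * mon S R)"
    using fun_cong[OF grass_expand[OF x(1)], of R] by (simp add: gsmult_def)
  then have "gdiff (f x) x R = (\<Sum>S | x S \<noteq> 0. x S * gdiff (f (mon S)) (mon S) R)"
    by (simp add: endo_expand[OF endo x(1)] gdiff_def sum_subtractf right_diff_distrib)
  also have "\<dots> = 0"
  proof (intro sum.neutral ballI)
    fix S
    assume "S \<in> {S. x S \<noteq> 0}"
    then have "finite S" "k \<le> card S"
      using x by (auto simp: grass_carrier_finite_monomial filt_def not_less[symmetric])
    then have "gdiff (f (mon S)) (mon S) \<in> filt (Suc k)"
      using endo_mon_gdiff_filt[OF endo lin] by (blast intro: filt_mono)
    then show "x S * gdiff (f (mon S)) (mon S) R = 0"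
      using card_R by (simp add: filt_def)
  qed
  finally show "gdiff (f x) x R = 0" .
qed

lemma endo_eq_gneg_imp_zero:
  assumes endo: "is_endo f" and lin: "identity_linear_part f"
    and x: "x \<in> grass_carrier" and anti: "f x = gneg x"
  shows "x = (\<lambda>S. 0)"
proof -
  have "x \<in> filt k" for k
  proof (induction k)
    case 0
    then show ?case by (simp add: filt_def)
  next
    case (Suc k)
    have "gdiff (f x) x \<in> filt (Suc k)"
      using endo_gdiff_filt[OF endo lin x Suc] .
    then show ?case by (simp add: filt_def gdiff_def gneg_def anti)
  qed
  then show ?thesis by (auto simp: filt_def)
qed

lemma linearization_id_imp_identity_linear_part:
  assumes "is_linearization f g" "\<forall>x\<in>grass_carrier. g x = x"
  shows "identity_linear_part f"
  unfolding identity_linear_part_def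
proof
  fix i
  obtain u v where "u \<in> Lspace" "\<forall>S. card S < 2 \<longrightarrow> v S = 0"
    "f (gen i) = gadd u v" "g (gen i) = u"
    using assms(1) unfolding is_linearization_def by blast
  moreover have "g (gen i) = gen i" using assms(2) gen_carrier by blast
  ultimately show "gdiff (f (gen i)) (gen i) \<in> filt 2"
    by (simp add: gdiff_def gadd_def filt_def)
qed

lemma involution_identity_linear_part_fixes_gen:
  assumes endo: "is_endo f" and invol: "is_involution f" and lin: "identity_linear_part f"
  shows "f (gen i) = gen i"
proof -
  define v where "v = gdiff (f (gen i)) (gen i)"
  have v_carrier: "v \<in> grass_carrier"
    by (simp add: v_def gdiff_carrier endo_carrier[OF endo] gen_carrier)
  have "f v = gdiff (f (f (gen i))) (f (gen i))"
    by (simp add: v_def endo_gdiff[OF endo] endo_carrier[OF endo] gen_carrier)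
  also have "\<dots> = gneg v"
    using invol by (simp add: is_involution_def gen_carrier v_def gdiff_def gneg_def)
  finally have "v = (\<lambda>S. 0)"
    using endo_eq_gneg_imp_zero[OF endo lin v_carrier] by blast
  then show ?thesis by (simp add: v_def gdiff_def fun_eq_iff)
qed

lemma inj_gen: "inj (gen :: nat \<Rightarrow> ('a::field_char_0) grass)"
proof (rule injI)
  fix i j
  assume "(gen i :: 'a grass) = gen j"
  then have "(gen j :: 'a grass) {i} = 1" by (metis gen_def)
  then show "i = j" by (simp add: gen_def split: if_splits)
qed

lemma sum_gen_singleton:
  assumes "finite A" "A \<subseteq> range gen"
  shows "(\<Sum>w\<in>A. c w * w {j}) = (if gen j \<in> A then c (gen j) else 0)"
proof -
  have "(\<Sum>w\<in>A. c w * w {j}) = (\<Sum>w\<in>A. if w = gen j then c w else 0)"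
    using assms(2) by (intro sum.cong) (auto simp: gen_def split: if_splits dest!: subsetD)
  then show ?thesis using assms(1) by (simp add: sum.delta')
qed

lemma finite_singleton_support:
  assumes "x \<in> grass_carrier"
  shows "finite {i. x {i} \<noteq> 0}"
proof -
  have "finite ((\<lambda>i. {i}) -` {S. x S \<noteq> 0})"
    using assms by (intro finite_vimageI) (simp_all add: grass_carrier_finite_support inj_def)
  then show ?thesis by (simp add: vimage_def)
qed

lemma Lspace_gen_expansion:
  assumes "x \<in> Lspace"
  shows "x = (\<lambda>S. \<Sum>w\<in>gen ` {i. x {i} \<noteq> 0}. x {inv gen w} * w S)"
proof
  fix S
  have "(\<Sum>w\<in>gen ` {i. x {i} \<noteq> 0}. x {inv gen w} * w S) = (\<Sum>i | x {i} \<noteq> 0. x {i} * gen i S)"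
    by (simp add: sum.reindex inj_on_subset[OF inj_gen] inv_f_f[OF inj_gen])
  also have "\<dots> = (\<Sum>i | x {i} \<noteq> 0. if S = {i} then x S else 0)"
    by (intro sum.cong) (auto simp: gen_def)
  also have "\<dots> = x S"
  proof (cases "card S = 1")
    case True
    then obtain j where "S = {j}" by (auto simp: card_1_singleton_iff)
    then show ?thesis
      using assms finite_singleton_support[of x] by (auto simp: Lspace_def sum.delta')
  next
    case False
    then have "x S = 0" "\<And>i. S \<noteq> {i}" using assms by (auto simp: Lspace_def)
    then show ?thesis by simp
  qed
  finally show "x S = (\<Sum>w\<in>gen ` {i. x {i} \<noteq> 0}. x {inv gen w} * w S)" by simp
qed

lemma gen_Lspace: "gen i \<in> Lspace"
  unfolding Lspace_def by (simp add: gen_carrier) (simp add: gen_def)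

lemma is_basis_L_range_gen: "is_basis_L (range gen)"
  unfolding is_basis_L_def
proof (intro conjI allI impI ballI)
  show "range gen \<subseteq> Lspace"
    by (auto simp: gen_Lspace)
next
  fix A c and v :: "'a grass"
  assume A: "finite A \<and> A \<subseteq> range gen \<and> (\<forall>S. (\<Sum>w\<in>A. c w * w S) = 0)" and "v \<in> A"
  then obtain j where "v = gen j" by auto
  then show "c v = 0" using A sum_gen_singleton[of A c j] \<open>v \<in> A\<close> by simp
next
  fix x :: "'a grass"
  assume x: "x \<in> Lspace"
  have "finite {i. x {i} \<noteq> 0}"
    using x finite_singleton_support[of x] by (auto simp: Lspace_def)
  then show "\<exists>A c. finite A \<and> A \<subseteq> range gen \<and> x = (\<lambda>S. \<Sum>v\<in>A. c v * v S)"
    using Lspace_gen_expansion[OF x] by (intro exI conjI) auto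
qed

theorem theorem5p1:
  shows "\<not> (\<exists>\<phi> :: ('a::field_char_0) grass \<Rightarrow> 'a grass. is_auto \<phi> \<and> is_involution \<phi> \<and> type4 \<phi>
            \<and> (\<exists>\<psi>. is_linearization \<phi> \<psi> \<and> (\<forall>x\<in>grass_carrier. \<psi> x = x)))"
proof
  assume "\<exists>\<phi> :: 'a grass \<Rightarrow> 'a grass. is_auto \<phi> \<and> is_involution \<phi> \<and> type4 \<phi>
            \<and> (\<exists>\<psi>. is_linearization \<phi> \<psi> \<and> (\<forall>x\<in>grass_carrier. \<psi> x = x))"
  then obtain \<phi> \<psi> :: "'a grass \<Rightarrow> 'a grass"
    where aut: "is_auto \<phi>" and invol: "is_involution \<phi>" and type4: "type4 \<phi>"
      and lin: "is_linearization \<phi> \<psi>" and lin_id: "\<forall>x\<in>grass_carrier. \<psi> x = x"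
    by blast
  have "\<phi> (gen 0) = gen 0"
    using aut invol linearization_id_imp_identity_linear_part[OF lin lin_id]
    by (simp add: is_auto_def involution_identity_linear_part_fixes_gen)
  moreover have "\<phi> (gen 0) \<noteq> gen 0"
    using type4 is_basis_L_range_gen unfolding type4_def by blast
  ultimately show False by simp
qed

end
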